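(* Fix $\alpha>0$, $\gamma>0$, $\Sigma_\epsilon>0$, $\omega_1\in[0,1)$, $\omega_2\in[0,1]$. Let $$T(x)=\left(\frac{\omega_2}{x^2}+\frac{(1-\omega_2)\alpha^2\gamma^2\Sigma_\epsilon}{(1+\gamma-x)^2}\right)^{-1/2},\qquad f_y(x)=\left(\frac{\omega_1}{x^2}+\frac{(1-\omega_1)\gamma^2\alpha^2\Sigma_\epsilon}{(1+\gamma-y)^2}\right)^{-1/2}.$$ Let $(\lambda_{2,t})_{t\in\mathbb Z}$ be a bi-infinite orbit of $T$ (i.e. $T(\lambda_{2,t})=\lambda_{2,t+1}$ for all $t\in\mathbb Z$) contained in a compact $T$-invariant interval $J\subset[1,1+\gamma)$. For $\lambda_{1,0},\lambda_{1,0}'\in[1,\infty)$ define $\lambda_{1,t+1}=f_{\lambda_{2,t}}(\lambda_{1,t})$ and $\lambda'_{1,t+1}=f_{\lambda_{2,t}}(\lambda'_{1,t})$ for $t\ge0$. Then $$\lim_{n\to\infty}|\lambda_{1,n}-\lambda'_{1,n}|=0.$$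
   Context: This is the case $\pi_1=0$ of the two-bank leverage model: bank 2 (the large, forcing bank) evolves autonomously by the unimodal map $T$, and bank 1 (the small, forced bank) evolves by the skew product $\lambda_{1,t+1}=f_{\lambda_{2,t}}(\lambda_{1,t})$, $\lambda_{2,t+1}=T(\lambda_{2,t})$. The space of bi-infinite $T$-orbits is the natural (invertible) extension $\hat I$ of $T$. *)

theory Defs
  imports "HOL-Analysis.Analysis"
begin

definition Tmap :: "real \<Rightarrow> real \<Rightarrow> real \<Rightarrow> real \<Rightarrow> real \<Rightarrow> real" where
  "Tmap \<alpha> \<gamma> \<Sigma> \<omega>\<^sub>2 x =
     (\<omega>\<^sub>2 / x^2 + (1 - \<omega>\<^sub>2) * \<alpha>^2 * \<gamma>^2 * \<Sigma> / (1 + \<gamma> - x)^2) powr (-1/2)"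

definition fmap :: "real \<Rightarrow> real \<Rightarrow> real \<Rightarrow> real \<Rightarrow> real \<Rightarrow> real \<Rightarrow> real" where
  "fmap \<alpha> \<gamma> \<Sigma> \<omega>\<^sub>1 y x =
     (\<omega>\<^sub>1 / x^2 + (1 - \<omega>\<^sub>1) * \<gamma>^2 * \<alpha>^2 * \<Sigma> / (1 + \<gamma> - y)^2) powr (-1/2)"

end

theory Submission imports Defs begin

text \<open>Writing \<open>v\<^sub>n = 1 / \<lambda>\<^sub>1\<^sub>,\<^sub>n\<^sup>2\<close>, the fibre dynamics becomes affine,
  \<open>v\<^sub>n\<^sub>+\<^sub>1 = \<omega>\<^sub>1 v\<^sub>n + c\<^sub>n\<close>, where \<open>c\<^sub>n\<close> depends only on the forcing orbit. Two orbits driven by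
  the same forcing therefore satisfy \<open>v\<^sub>n - v'\<^sub>n = \<omega>\<^sub>1\<^sup>n (v\<^sub>0 - v'\<^sub>0) \<longrightarrow> 0\<close>. Since
  \<open>\<lambda>\<^sub>2 \<ge> 1\<close> keeps \<open>c\<^sub>n\<close> uniformly away from 0, the map \<open>v \<mapsto> v\<^sup>-\<^sup>1\<^sup>/\<^sup>2\<close> is Lipschitz on
  the relevant range, and the convergence transfers to \<open>\<lambda>\<^sub>1\<close>.\<close>

lemma inverse_sqrt_lipschitz:
  fixes c p q :: real
  assumes "0 < c" "c \<le> p" "c \<le> q"
  shows "\<bar>1 / sqrt p - 1 / sqrt q\<bar> \<le> \<bar>p - q\<bar> / (2 * c * sqrt c)"
proof -
  define D where "D = sqrt p * sqrt q * (sqrt p + sqrt q)"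
  have sqrt_ge: "sqrt c \<le> sqrt p" "sqrt c \<le> sqrt q" and "0 < sqrt c"
    using assms by auto
  have "q - p = (sqrt q - sqrt p) * (sqrt p + sqrt q)"
    using assms by (simp add: algebra_simps)
  moreover have "0 < sqrt p + sqrt q"
    using sqrt_ge \<open>0 < sqrt c\<close> by linarith
  ultimately have "(q - p) / D = (sqrt q - sqrt p) / (sqrt p * sqrt q)"
    by (simp add: D_def)
  also have "\<dots> = 1 / sqrt p - 1 / sqrt q"
    using sqrt_ge \<open>0 < sqrt c\<close> by (simp add: field_simps)
  finally have "\<bar>1 / sqrt p - 1 / sqrt q\<bar> = \<bar>p - q\<bar> / \<bar>D\<bar>"
    by (metis abs_divide abs_minus_commute)
  moreover have "c * (2 * sqrt c) \<le> D"
    unfolding D_def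
  proof (rule mult_mono)
    show "c \<le> sqrt p * sqrt q"
      using mult_mono[OF sqrt_ge] assms by simp
    show "2 * sqrt c \<le> sqrt p + sqrt q"
      using sqrt_ge by linarith
  qed (use assms in auto)
  moreover have "0 < c * (2 * sqrt c)"
    using assms by simp
  ultimately show ?thesis
    by (simp add: divide_left_mono mult.assoc)
qed

lemma affine_recurrence_diff:
  fixes v v' b :: "nat \<Rightarrow> 'a::comm_ring_1"
  assumes "\<And>n. v (Suc n) = w * v n + b n" and "\<And>n. v' (Suc n) = w * v' n + b n"
  shows "v n - v' n = w ^ n * (v 0 - v' 0)"
proof -
  have "v (Suc n) - v' (Suc n) = w * (v n - v' n)" for n
    by (simp add: assms algebra_simps)
  then show ?thesis
    by (induction n) simp_all
qed

lemma inverse_sqrt_recurrence_synchronizes: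
  fixes w c\<^sub>0 :: real and c x x' :: "nat \<Rightarrow> real"
  assumes "0 \<le> w" "w < 1" "0 < c\<^sub>0" "\<And>n. c\<^sub>0 \<le> c n"
    and x_Suc: "\<And>n. x (Suc n) = (w / (x n)\<^sup>2 + c n) powr (-1/2)"
    and x'_Suc: "\<And>n. x' (Suc n) = (w / (x' n)\<^sup>2 + c n) powr (-1/2)"
  shows "(\<lambda>n. \<bar>x n - x' n\<bar>) \<longlonglongrightarrow> 0"
proof -
  define v where "v n = w / (x n)\<^sup>2 + c n" for n
  define v' where "v' n = w / (x' n)\<^sup>2 + c n" for n
  define d where "d = v 0 - v' 0"
  have v_ge: "c\<^sub>0 \<le> v n" "c\<^sub>0 \<le> v' n" for n
    using assms(1) assms(4)[of n] unfolding v_def v'_def by (simp_all add: add_increasing)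
  have v_pos: "0 < v n" "0 < v' n" for n
    using v_ge[of n] assms(3) by linarith+
  have x_eq: "x (Suc n) = 1 / sqrt (v n)" and x'_eq: "x' (Suc n) = 1 / sqrt (v' n)" for n
    using x_Suc[of n, folded v_def] x'_Suc[of n, folded v'_def] v_pos[of n]
    by (simp_all add: powr_minus_divide powr_half_sqrt)
  have "(x (Suc n))\<^sup>2 = 1 / v n" "(x' (Suc n))\<^sup>2 = 1 / v' n" for n
    using v_pos[of n] by (simp_all add: x_eq x'_eq power_divide)
  then have "v (Suc n) = w * v n + c (Suc n)" "v' (Suc n) = w * v' n + c (Suc n)" for n
    by (simp_all add: v_def v'_def)
  then have v_diff: "v n - v' n = w ^ n * d" for n
    unfolding d_def by (rule affine_recurrence_diff)
  have "(\<lambda>n. w ^ n * d) \<longlonglongrightarrow> 0"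
    using LIMSEQ_power_zero[of w] assms(1,2) by (simp add: tendsto_mult_left_zero)
  then have v_lim: "(\<lambda>n. \<bar>v n - v' n\<bar> / (2 * c\<^sub>0 * sqrt c\<^sub>0)) \<longlonglongrightarrow> 0"
    unfolding v_diff by (rule tendsto_divide_zero[OF tendsto_rabs_zero])
  have x_bound: "\<bar>x (Suc n) - x' (Suc n)\<bar> \<le> \<bar>v n - v' n\<bar> / (2 * c\<^sub>0 * sqrt c\<^sub>0)" for n
    unfolding x_eq x'_eq using assms(3) v_ge by (rule inverse_sqrt_lipschitz)
  have "(\<lambda>n. \<bar>x (Suc n) - x' (Suc n)\<bar>) \<longlonglongrightarrow> 0"
    by (rule Lim_null_comparison[OF _ v_lim]) (simp add: x_bound)
  then show ?thesis
    by (rule LIMSEQ_imp_Suc)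
qed

theorem mainTheorem2:
  fixes \<alpha> \<gamma> \<Sigma> \<omega>\<^sub>1 \<omega>\<^sub>2 a b :: real
    and lam2 :: "int \<Rightarrow> real"
    and lam1 lam1' :: "nat \<Rightarrow> real"
  assumes "\<alpha> > 0" and "\<gamma> > 0" and "\<Sigma> > 0"
    and "0 \<le> \<omega>\<^sub>1" and "\<omega>\<^sub>1 < 1"
    and "0 \<le> \<omega>\<^sub>2" and "\<omega>\<^sub>2 \<le> 1"
    and "a \<le> b" and "{a..b} \<subseteq> {1..<1 + \<gamma>}"
    and "Tmap \<alpha> \<gamma> \<Sigma> \<omega>\<^sub>2 ` {a..b} \<subseteq> {a..b}"
    and "\<And>t. lam2 t \<in> {a..b}"
    and "\<And>t. Tmap \<alpha> \<gamma> \<Sigma> \<omega>\<^sub>2 (lam2 t) = lam2 (t + 1)"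
    and "lam1 0 \<ge> 1" and "lam1' 0 \<ge> 1"
    and "\<And>t. lam1 (Suc t) = fmap \<alpha> \<gamma> \<Sigma> \<omega>\<^sub>1 (lam2 (int t)) (lam1 t)"
    and "\<And>t. lam1' (Suc t) = fmap \<alpha> \<gamma> \<Sigma> \<omega>\<^sub>1 (lam2 (int t)) (lam1' t)"
  shows "(\<lambda>n. \<bar>lam1 n - lam1' n\<bar>) \<longlonglongrightarrow> 0"
proof -
  define K where "K = (1 - \<omega>\<^sub>1) * \<gamma>\<^sup>2 * \<alpha>\<^sup>2 * \<Sigma>"
  define c where "c t = K / (1 + \<gamma> - lam2 (int t))\<^sup>2" for t
  have "0 < K"
    using assms(1-3,5) by (simp add: K_def)
  have "K / \<gamma>\<^sup>2 \<le> c t" for t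
  proof -
    have "1 \<le> lam2 (int t)" "lam2 (int t) < 1 + \<gamma>"
      using assms(9) assms(11)[of "int t"] by auto
    then show ?thesis
      using \<open>0 < K\<close> by (auto simp: c_def intro!: divide_left_mono power_mono)
  qed
  moreover have "0 < K / \<gamma>\<^sup>2"
    using \<open>0 < K\<close> assms(2) by simp
  ultimately show ?thesis
    using assms(4,5,15,16)
    by (intro inverse_sqrt_recurrence_synchronizes[where c = c])
      (simp_all add: fmap_def c_def K_def)
qed

end
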